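(* Let $G$ be an $N$-cube Adinkra with heights disregarded. Then $G$ is minimally vertex-transitive up to the bipartition: the only automorphism of $G$ fixing a vertex is the identity permutation, and $|\mathrm{Aut}(G)|=\tfrac12|V|=2^{N-1}$.
   Context: An Adinkra of dimension $N$ is a finite connected simple graph $G=(V,E)$ together with: (1) a bipartition of $V$ into bosons and fermions such that every edge joins a boson and a fermion; (2) a height function (here disregarded); (3) a coloring of $E$ by colors $\{1,\dots,N\}$ such that each vertex is incident to exactly one edge of each color; (4) an edge parity $\pi:E\to\mathbb{Z}_2$ (parity $1$ = dashed). These must satisfy: every path with edge colors $(i,j)$, $i\neq j$, lies in a unique 4-cycle with colors $(i,j,i,j)$, and every such two-colored 4-cycle has an odd number of dashed edges. An $N$-cube Adinkra has $2^N$ vertices. Switching a vertex reverses the parity of all edges incident to it. An automorphism of $G$ is a permutation of $V$ preserving adjacency, edge colors and the bipartition, which becomes parity-preserving after switching some set of vertices; automorphisms are identified when they induce the same permutation of $V$, and $\mathrm{Aut}(G)$ is the group of these permutations. *)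

theory Defs
  imports Main
begin

text \<open>Edges are two-element vertex sets; colors are naturals in 1..N;
  the parity of an edge is a boolean (True = dashed); boson v says v is a boson,
  fermions are the vertices of V with boson v = False.\<close>

definition adinkra ::
  "nat \<Rightarrow> 'v set \<Rightarrow> 'v set set \<Rightarrow> ('v \<Rightarrow> bool) \<Rightarrow> ('v set \<Rightarrow> nat) \<Rightarrow> ('v set \<Rightarrow> bool) \<Rightarrow> bool"
where
  "adinkra N V E boson col par \<longleftrightarrow>
     finite V \<and> V \<noteq> {} \<and>
     \<comment> \<open>simple graph\<close>
     (\<forall>e\<in>E. \<exists>u v. u \<in> V \<and> v \<in> V \<and> u \<noteq> v \<and> e = {u, v}) \<and>
     \<comment> \<open>connected\<close>
     (\<forall>u\<in>V. \<forall>v\<in>V. (u, v) \<in> {(x, y). {x, y} \<in> E}\<^sup>*) \<and>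
     \<comment> \<open>bipartition: every edge joins a boson and a fermion\<close>
     (\<forall>e\<in>E. \<exists>u v. e = {u, v} \<and> boson u \<and> \<not> boson v) \<and>
     \<comment> \<open>coloring\<close>
     (\<forall>e\<in>E. col e \<in> {1..N}) \<and>
     (\<forall>v\<in>V. \<forall>i\<in>{1..N}. \<exists>!e. e \<in> E \<and> v \<in> e \<and> col e = i) \<and>
     \<comment> \<open>every (i,j)-path lies in a unique (i,j,i,j)-colored 4-cycle\<close>
     (\<forall>v0 v1 v2 i j. i \<noteq> j \<and> {v0, v1} \<in> E \<and> col {v0, v1} = i \<and>
          {v1, v2} \<in> E \<and> col {v1, v2} = j \<longrightarrow>
        (\<exists>!v3. {v2, v3} \<in> E \<and> col {v2, v3} = i \<and> {v3, v0} \<in> E \<and> col {v3, v0} = j)) \<and>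
     \<comment> \<open>every two-colored 4-cycle has an odd number of dashed edges\<close>
     (\<forall>v0 v1 v2 v3 i j. i \<noteq> j \<and>
          {v0, v1} \<in> E \<and> col {v0, v1} = i \<and> {v1, v2} \<in> E \<and> col {v1, v2} = j \<and>
          {v2, v3} \<in> E \<and> col {v2, v3} = i \<and> {v3, v0} \<in> E \<and> col {v3, v0} = j \<longrightarrow>
        odd (of_bool (par {v0, v1}) + of_bool (par {v1, v2}) + of_bool (par {v2, v3})
             + of_bool (par {v3, v0}) :: nat))"

definition switch :: "'v set \<Rightarrow> ('v set \<Rightarrow> bool) \<Rightarrow> 'v set \<Rightarrow> bool" where
  "switch S par e = (par e \<noteq> odd (card (e \<inter> S)))"

definition adinkra_automorphism ::
  "'v set \<Rightarrow> 'v set set \<Rightarrow> ('v \<Rightarrow> bool) \<Rightarrow> ('v set \<Rightarrow> nat) \<Rightarrow> ('v set \<Rightarrow> bool) \<Rightarrow> ('v \<Rightarrow> 'v) \<Rightarrow> bool"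
where
  "adinkra_automorphism V E boson col par f \<longleftrightarrow>
     bij_betw f V V \<and>
     (\<forall>u\<in>V. \<forall>v\<in>V. {u, v} \<in> E \<longleftrightarrow> {f u, f v} \<in> E) \<and>
     (\<forall>e\<in>E. col (f ` e) = col e) \<and>
     (\<forall>v\<in>V. boson (f v) = boson v) \<and>
     (\<exists>S\<subseteq>V. \<forall>e\<in>E. par (f ` e) = switch S par e)"

text \<open>Aut(G): automorphisms identified with the permutations of V they induce
  (represented by functions that are the identity outside V).\<close>
definition Aut ::
  "'v set \<Rightarrow> 'v set set \<Rightarrow> ('v \<Rightarrow> bool) \<Rightarrow> ('v set \<Rightarrow> nat) \<Rightarrow> ('v set \<Rightarrow> bool) \<Rightarrow> ('v \<Rightarrow> 'v) set"
where
  "Aut V E boson col par =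
     {f. adinkra_automorphism V E boson col par f \<and> (\<forall>x. x \<notin> V \<longrightarrow> f x = x)}"

end

theory Submission
  imports Defs
begin

text \<open>
  The colour-\<open>i\<close> neighbour maps \<open>nbr i\<close> are involutions of \<open>V\<close>, and the unique
  \<open>(i, j)\<close>-square condition makes them commute, so every \<open>T \<subseteq> {1..N}\<close> acts on \<open>V\<close>
  by \<open>flips T = \<Prod>\<^sub>j\<^sub>\<in>\<^sub>T nbr j\<close>.  By connectedness this action of \<open>\<int>\<^sub>2\<^sup>N\<close> is transitive,
  and since \<open>|V| = 2\<^sup>N\<close> it is simply transitive: the Adinkra is the \<open>N\<close>-cube.

  An automorphism preserves colours, hence commutes with every \<open>nbr i\<close> and is
  determined by the image of one vertex.  Conversely \<open>flips T\<close> with \<open>|T|\<close> even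
  preserves the bipartition, edges and colours, and it preserves the dashing up to
  switching: pulling an odd dashing back along one \<open>nbr i\<close> changes it by a switching,
  read off from the \<open>i\<close>-th cube coordinate.  So \<open>Aut\<close> is in bijection with the
  vertices of the same type as a fixed vertex, which are half of \<open>V\<close>.
\<close>

lemma switch_pair: "u \<noteq> v \<Longrightarrow> switch S Q {u, v} = (Q {u, v} \<noteq> ((u \<in> S) \<noteq> (v \<in> S)))"
  unfolding switch_def by (cases "u \<in> S"; cases "v \<in> S") (auto simp: Int_insert_left)

lemma odd_of_bool_sum4:
  "odd (of_bool a + of_bool b + of_bool c + of_bool d :: nat) \<longleftrightarrow> (a \<noteq> (b \<noteq> (c \<noteq> d)))"
  by (cases a; cases b; cases c; cases d) auto

locale adinkra_graph =
  fixes N :: nat and V :: "'v set" and E :: "'v set set" and boson :: "'v \<Rightarrow> bool"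
    and col :: "'v set \<Rightarrow> nat" and par :: "'v set \<Rightarrow> bool"
  assumes adinkra: "adinkra N V E boson col par"
begin

lemma finite_V: "finite V"
  using adinkra by (simp add: adinkra_def)

lemma edge_doubleton: "e \<in> E \<Longrightarrow> \<exists>u v. u \<in> V \<and> v \<in> V \<and> u \<noteq> v \<and> e = {u, v}"
  using adinkra by (simp add: adinkra_def)

lemma connected: "u \<in> V \<Longrightarrow> v \<in> V \<Longrightarrow> (u, v) \<in> {(x, y). {x, y} \<in> E}\<^sup>*"
  using adinkra by (simp add: adinkra_def)

lemma edge_bipartite: "e \<in> E \<Longrightarrow> \<exists>u v. e = {u, v} \<and> boson u \<and> \<not> boson v"
  using adinkra by (simp add: adinkra_def)

lemma col_edge: "e \<in> E \<Longrightarrow> col e \<in> {1..N}"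
  using adinkra by (simp add: adinkra_def)

lemma ex1_edge_of_col: "v \<in> V \<Longrightarrow> i \<in> {1..N} \<Longrightarrow> \<exists>!e. e \<in> E \<and> v \<in> e \<and> col e = i"
  using adinkra by (simp add: adinkra_def)

lemma ex1_square:
  assumes "i \<noteq> j" "{v0, v1} \<in> E" "col {v0, v1} = i" "{v1, v2} \<in> E" "col {v1, v2} = j"
  shows "\<exists>!v3. {v2, v3} \<in> E \<and> col {v2, v3} = i \<and> {v3, v0} \<in> E \<and> col {v3, v0} = j"
proof -
  from adinkra have "\<forall>v0 v1 v2 i j. i \<noteq> j \<and> {v0, v1} \<in> E \<and> col {v0, v1} = i \<and>
      {v1, v2} \<in> E \<and> col {v1, v2} = j \<longrightarrow>
      (\<exists>!v3. {v2, v3} \<in> E \<and> col {v2, v3} = i \<and> {v3, v0} \<in> E \<and> col {v3, v0} = j)"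
    unfolding adinkra_def by (elim conjE)
  with assms show ?thesis by blast
qed

definition odd_dashing :: "('v set \<Rightarrow> bool) \<Rightarrow> bool" where
  "odd_dashing Q \<longleftrightarrow> (\<forall>v0 v1 v2 v3 i j. i \<noteq> j \<and>
     {v0, v1} \<in> E \<and> col {v0, v1} = i \<and> {v1, v2} \<in> E \<and> col {v1, v2} = j \<and>
     {v2, v3} \<in> E \<and> col {v2, v3} = i \<and> {v3, v0} \<in> E \<and> col {v3, v0} = j \<longrightarrow>
     odd (of_bool (Q {v0, v1}) + of_bool (Q {v1, v2}) + of_bool (Q {v2, v3})
          + of_bool (Q {v3, v0}) :: nat))"

lemma odd_dashing_par: "odd_dashing par"
  using adinkra unfolding adinkra_def odd_dashing_def by (elim conjE)

lemma edge_pairD: "{y, z} \<in> E \<Longrightarrow> y \<noteq> z \<and> y \<in> V \<and> z \<in> V"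
  using edge_doubleton[of "{y, z}"] by (auto simp: doubleton_eq_iff)

lemma edge_col_inj:
  assumes "{y, z} \<in> E" "{y, z'} \<in> E" "col {y, z} = col {y, z'}"
  shows "z = z'"
proof -
  have "y \<in> V" "y \<noteq> z" using edge_pairD[OF assms(1)] by auto
  then have "\<exists>!e. e \<in> E \<and> y \<in> e \<and> col e = col {y, z}"
    using ex1_edge_of_col col_edge[OF assms(1)] by simp
  then have "{y, z} = {y, z'}"
    using assms by (metis insertI1)
  with \<open>y \<noteq> z\<close> show "z = z'" by (auto simp: doubleton_eq_iff)
qed

definition nbr :: "nat \<Rightarrow> 'v \<Rightarrow> 'v" where
  "nbr i y = (THE z. {y, z} \<in> E \<and> col {y, z} = i)"

lemma nbr_edge:
  assumes "y \<in> V" "i \<in> {1..N}"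
  shows "{y, nbr i y} \<in> E \<and> col {y, nbr i y} = i"
proof -
  obtain e where e: "e \<in> E" "y \<in> e" "col e = i" using ex1_edge_of_col[OF assms] by blast
  then obtain z where "e = {y, z}" using edge_doubleton by blast
  with e have "\<exists>!z. {y, z} \<in> E \<and> col {y, z} = i" using edge_col_inj by blast
  then show ?thesis unfolding nbr_def by (rule theI')
qed

lemma nbr_eqI: "{y, z} \<in> E \<Longrightarrow> col {y, z} = i \<Longrightarrow> nbr i y = z"
  using nbr_edge[of y i] edge_pairD col_edge edge_col_inj by metis

lemma nbr_in_V: "y \<in> V \<Longrightarrow> i \<in> {1..N} \<Longrightarrow> nbr i y \<in> V"
  using nbr_edge edge_pairD by blast

lemma nbr_nbr: "y \<in> V \<Longrightarrow> i \<in> {1..N} \<Longrightarrow> nbr i (nbr i y) = y"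
  using nbr_edge[of y i] nbr_eqI[of "nbr i y" y i] by (simp add: insert_commute)

lemma boson_nbr: "y \<in> V \<Longrightarrow> i \<in> {1..N} \<Longrightarrow> boson (nbr i y) = (\<not> boson y)"
  using nbr_edge[of y i] edge_bipartite[of "{y, nbr i y}"] by (auto simp: doubleton_eq_iff)

lemma nbr_commute:
  assumes "y \<in> V" "i \<in> {1..N}" "j \<in> {1..N}"
  shows "nbr i (nbr j y) = nbr j (nbr i y)"
proof (cases "i = j")
  case False
  have "{nbr i y, y} \<in> E" "col {nbr i y, y} = i"
    using nbr_edge[OF assms(1,2)] by (auto simp: insert_commute)
  moreover have "{y, nbr j y} \<in> E" "col {y, nbr j y} = j"
    using nbr_edge[OF assms(1,3)] by auto
  ultimately obtain w where
    "{nbr j y, w} \<in> E" "col {nbr j y, w} = i" "{w, nbr i y} \<in> E" "col {w, nbr i y} = j"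
    using ex1_square[OF False] by blast
  then have "nbr i (nbr j y) = w" "nbr j (nbr i y) = w"
    using nbr_eqI by (metis insert_commute)+
  then show ?thesis by simp
qed simp

lemma edge_eq_nbr: "e \<in> E \<Longrightarrow> \<exists>y\<in>V. e = {y, nbr (col e) y}"
  using edge_doubleton nbr_eqI by metis

lemma nbr_edge_edge:
  assumes "{a, b} \<in> E" "i \<in> {1..N}"
  shows "{nbr i a, nbr i b} \<in> E \<and> col {nbr i a, nbr i b} = col {a, b}"
proof -
  have a: "a \<in> V" and c: "col {a, b} \<in> {1..N}" using assms edge_pairD col_edge by blast+
  have "nbr i b = nbr (col {a, b}) (nbr i a)"
    using nbr_eqI[OF assms(1)] nbr_commute a c assms(2) by metis
  then show ?thesis using nbr_edge[of "nbr i a" "col {a, b}"] nbr_in_V a assms(2) c by auto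
qed

fun flips_upto :: "nat set \<Rightarrow> nat \<Rightarrow> 'v \<Rightarrow> 'v" where
  "flips_upto T 0 y = y"
| "flips_upto T (Suc k) y = (if Suc k \<in> T then nbr (Suc k) (flips_upto T k y) else flips_upto T k y)"

definition flips :: "nat set \<Rightarrow> 'v \<Rightarrow> 'v" where
  "flips T = flips_upto T N"

lemma flips_upto_in_V: "k \<le> N \<Longrightarrow> y \<in> V \<Longrightarrow> flips_upto T k y \<in> V"
  by (induction k) (auto intro: nbr_in_V)

lemma nbr_flips_upto:
  "k \<le> N \<Longrightarrow> y \<in> V \<Longrightarrow> i \<in> {1..N} \<Longrightarrow> nbr i (flips_upto T k y) = flips_upto T k (nbr i y)"
proof (induction k)
  case (Suc k)
  then show ?case using nbr_commute[of "flips_upto T k y" i "Suc k"] flips_upto_in_V[of k y T] by auto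
qed simp

lemma flips_upto_flips_upto: "k \<le> N \<Longrightarrow> y \<in> V \<Longrightarrow> flips_upto T k (flips_upto T k y) = y"
proof (induction k)
  case (Suc k)
  have v: "flips_upto T k y \<in> V" using Suc flips_upto_in_V by simp
  show ?case
  proof (cases "Suc k \<in> T")
    case True
    then have "flips_upto T (Suc k) (flips_upto T (Suc k) y) =
        nbr (Suc k) (flips_upto T k (nbr (Suc k) (flips_upto T k y)))" by simp
    also have "\<dots> = nbr (Suc k) (nbr (Suc k) (flips_upto T k (flips_upto T k y)))"
      using nbr_flips_upto[of k "flips_upto T k y" "Suc k" T] Suc v by simp
    also have "\<dots> = y" using Suc nbr_nbr by simp
    finally show ?thesis .
  qed (use Suc in simp)
qed simp

lemma flips_upto_cong: "(\<And>j. j \<in> {1..k} \<Longrightarrow> j \<in> T \<longleftrightarrow> j \<in> T') \<Longrightarrow> flips_upto T k y = flips_upto T' k y"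
  by (induction k) auto

lemma nbr_flips_upto_symdiff:
  "k \<le> N \<Longrightarrow> y \<in> V \<Longrightarrow> i \<in> {1..k} \<Longrightarrow> nbr i (flips_upto T k y) = flips_upto (T - {i} \<union> ({i} - T)) k y"
proof (induction k)
  case (Suc k)
  have v: "flips_upto T k y \<in> V" using Suc flips_upto_in_V by simp
  show ?case
  proof (cases "i = Suc k")
    case True
    have "flips_upto T k y = flips_upto (T - {i} \<union> ({i} - T)) k y"
      by (rule flips_upto_cong) (use True in auto)
    with True Suc.prems nbr_nbr[OF v] show ?thesis by auto
  next
    case False
    with Suc have "nbr i (flips_upto T k y) = flips_upto (T - {i} \<union> ({i} - T)) k y" by simp
    with False Suc.prems nbr_commute[OF v, of i "Suc k"] show ?thesis by auto
  qed
qed simp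

lemma boson_flips_upto:
  "k \<le> N \<Longrightarrow> y \<in> V \<Longrightarrow> boson (flips_upto T k y) = (boson y \<noteq> odd (card (T \<inter> {1..k})))"
proof (induction k)
  case (Suc k)
  have v: "flips_upto T k y \<in> V" using Suc flips_upto_in_V by simp
  have "{1..Suc k} = insert (Suc k) {1..k}" by auto
  then have "T \<inter> {1..Suc k} = (if Suc k \<in> T then insert (Suc k) (T \<inter> {1..k}) else T \<inter> {1..k})"
    by auto
  with Suc boson_nbr[OF v, of "Suc k"] show ?case by auto
qed simp

lemma flips_in_V: "y \<in> V \<Longrightarrow> flips T y \<in> V"
  unfolding flips_def using flips_upto_in_V by simp

lemma flips_flips: "y \<in> V \<Longrightarrow> flips T (flips T y) = y"
  unfolding flips_def using flips_upto_flips_upto by simp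

lemma nbr_flips: "y \<in> V \<Longrightarrow> i \<in> {1..N} \<Longrightarrow> nbr i (flips T y) = flips T (nbr i y)"
  unfolding flips_def using nbr_flips_upto by simp

lemma nbr_flips_symdiff: "y \<in> V \<Longrightarrow> i \<in> {1..N} \<Longrightarrow> nbr i (flips T y) = flips (T - {i} \<union> ({i} - T)) y"
  unfolding flips_def using nbr_flips_upto_symdiff by simp

lemma boson_flips: "y \<in> V \<Longrightarrow> T \<subseteq> {1..N} \<Longrightarrow> boson (flips T y) = (boson y \<noteq> odd (card T))"
  unfolding flips_def using boson_flips_upto[of N y T] by (simp add: Int_absorb2)

lemma flips_edge:
  assumes "{u, v} \<in> E"
  shows "{flips T u, flips T v} \<in> E \<and> col {flips T u, flips T v} = col {u, v}"
proof -
  have u: "u \<in> V" and c: "col {u, v} \<in> {1..N}" using assms edge_pairD col_edge by blast+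
  have "flips T v = nbr (col {u, v}) (flips T u)"
    using nbr_eqI[OF assms] nbr_flips u c by simp
  then show ?thesis using nbr_edge[of "flips T u" "col {u, v}"] flips_in_V u c by auto
qed

lemma flips_surj:
  assumes "b \<in> V" "z \<in> V"
  shows "\<exists>T\<subseteq>{1..N}. z = flips T b"
proof -
  have "(b, z) \<in> {(x, y). {x, y} \<in> E}\<^sup>*" using connected assms by blast
  then show ?thesis
  proof (induction rule: rtrancl_induct)
    case base
    have "flips_upto {} k b = b" for k by (induction k) auto
    then have "b = flips {} b" unfolding flips_def by simp
    then show ?case by blast
  next
    case (step y z)
    then obtain T where T: "T \<subseteq> {1..N}" "y = flips T b" by blast
    define i where "i = col {y, z}"
    have yz: "{y, z} \<in> E" using step by simp
    then have i: "i \<in> {1..N}" using col_edge i_def by blast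
    have "z = flips (T - {i} \<union> ({i} - T)) b"
      using nbr_eqI[OF yz] nbr_flips_symdiff[OF assms(1) i] T(2) i_def by simp
    moreover have "T - {i} \<union> ({i} - T) \<subseteq> {1..N}" using T(1) i by auto
    ultimately show ?case by blast
  qed
qed

definition switching_equiv :: "('v set \<Rightarrow> bool) \<Rightarrow> ('v set \<Rightarrow> bool) \<Rightarrow> bool" where
  "switching_equiv Q Q' \<longleftrightarrow> (\<exists>S\<subseteq>V. \<forall>e\<in>E. Q' e = switch S Q e)"

lemma switching_equiv_refl: "switching_equiv Q Q"
  unfolding switching_equiv_def switch_def by (intro exI[of _ "{}"]) simp

lemma switching_equiv_trans:
  assumes "switching_equiv Q Q'" "switching_equiv Q' Q''"
  shows "switching_equiv Q Q''"
proof -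
  obtain S1 S2 where S: "S1 \<subseteq> V" "S2 \<subseteq> V"
    and Q': "\<forall>e\<in>E. Q' e = switch S1 Q e" and Q'': "\<forall>e\<in>E. Q'' e = switch S2 Q' e"
    using assms unfolding switching_equiv_def by blast
  have "Q'' e = switch (S1 - S2 \<union> (S2 - S1)) Q e" if e: "e \<in> E" for e
  proof -
    obtain u v where "u \<noteq> v" "e = {u, v}" using edge_doubleton[OF e] by blast
    with Q' Q'' e show ?thesis by (auto simp: switch_pair)
  qed
  moreover have "S1 - S2 \<union> (S2 - S1) \<subseteq> V" using S by auto
  ultimately show ?thesis unfolding switching_equiv_def by blast
qed

lemma automorphism_nbr:
  assumes "adinkra_automorphism V E boson col par f" "y \<in> V" "i \<in> {1..N}"
  shows "f (nbr i y) = nbr i (f y)"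
proof -
  have e: "{y, nbr i y} \<in> E" "col {y, nbr i y} = i" using nbr_edge assms(2,3) by auto
  moreover have "nbr i y \<in> V" using nbr_in_V assms(2,3) by simp
  ultimately have "{f y, f (nbr i y)} \<in> E" "col {f y, f (nbr i y)} = i"
    using assms(1,2) unfolding adinkra_automorphism_def by (metis image_empty image_insert)+
  then show ?thesis using nbr_eqI by metis
qed

lemma automorphism_flips:
  assumes "adinkra_automorphism V E boson col par f" "y \<in> V"
  shows "f (flips T y) = flips T (f y)"
proof -
  have "k \<le> N \<Longrightarrow> f (flips_upto T k y) = flips_upto T k (f y)" for k
    by (induction k) (use automorphism_nbr[OF assms(1)] flips_upto_in_V assms(2) in auto)
  then show ?thesis unfolding flips_def by simp
qed

lemma Aut_eqI:
  assumes f: "f \<in> Aut V E boson col par" and g: "g \<in> Aut V E boson col par"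
    and "b \<in> V" "f b = g b"
  shows "f = g"
proof
  fix z
  show "f z = g z"
  proof (cases "z \<in> V")
    case True
    then obtain T where "z = flips T b" using flips_surj \<open>b \<in> V\<close> by blast
    moreover have "adinkra_automorphism V E boson col par f" "adinkra_automorphism V E boson col par g"
      using f g unfolding Aut_def by auto
    ultimately show ?thesis using automorphism_flips assms(3,4) by metis
  next
    case False
    with f g show ?thesis unfolding Aut_def by auto
  qed
qed

lemma id_in_Aut: "id \<in> Aut V E boson col par"
  using switching_equiv_refl[of par]
  unfolding Aut_def adinkra_automorphism_def switching_equiv_def by auto

lemma Aut_fixing_vertex: "f \<in> Aut V E boson col par \<Longrightarrow> v \<in> V \<Longrightarrow> f v = v \<Longrightarrow> f = id"
  using Aut_eqI[OF _ id_in_Aut] by simp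

lemma Aut_in_V: "f \<in> Aut V E boson col par \<Longrightarrow> y \<in> V \<Longrightarrow> f y \<in> V"
  unfolding Aut_def adinkra_automorphism_def bij_betw_def by blast

lemma Aut_boson: "f \<in> Aut V E boson col par \<Longrightarrow> y \<in> V \<Longrightarrow> boson (f y) = boson y"
  unfolding Aut_def adinkra_automorphism_def by blast

lemma card_same_type:
  assumes "1 \<le> N" "b \<in> V"
  shows "2 * card {x \<in> V. boson x = boson b} = card V"
proof -
  define Bo where "Bo = {x \<in> V. boson x}"
  define Fe where "Fe = {x \<in> V. \<not> boson x}"
  have "1 \<in> {1..N}" using assms(1) by simp
  then have "bij_betw (nbr 1) Bo Fe"
    by (intro bij_betw_byWitness[where f' = "nbr 1"])
      (use nbr_nbr nbr_in_V boson_nbr in \<open>auto simp: Bo_def Fe_def\<close>)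
  then have "card Bo = card Fe" by (rule bij_betw_same_card)
  moreover have "card V = card Bo + card Fe"
  proof -
    have "V = Bo \<union> Fe" "Bo \<inter> Fe = {}" unfolding Bo_def Fe_def by auto
    then show ?thesis using finite_V card_Un_disjoint by (metis finite_Un)
  qed
  ultimately show ?thesis unfolding Bo_def Fe_def by (cases "boson b") auto
qed

lemma odd_dashing_nbr_pullback:
  assumes "odd_dashing Q" "i \<in> {1..N}"
  shows "odd_dashing (\<lambda>e. Q (nbr i ` e))"
  unfolding odd_dashing_def
proof (intro allI impI)
  fix v0 v1 v2 v3 a b
  assume "a \<noteq> b \<and> {v0, v1} \<in> E \<and> col {v0, v1} = a \<and> {v1, v2} \<in> E \<and> col {v1, v2} = b \<and>
      {v2, v3} \<in> E \<and> col {v2, v3} = a \<and> {v3, v0} \<in> E \<and> col {v3, v0} = b"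
  then show "odd (of_bool (Q (nbr i ` {v0, v1})) + of_bool (Q (nbr i ` {v1, v2}))
      + of_bool (Q (nbr i ` {v2, v3})) + of_bool (Q (nbr i ` {v3, v0})) :: nat)"
    using assms(1)[unfolded odd_dashing_def, rule_format, of a b "nbr i v0" "nbr i v1" "nbr i v2" "nbr i v3"]
      nbr_edge_edge[OF _ assms(2)] by simp
qed

text \<open>Given a function \<open>c\<close> that changes exactly along the \<open>i\<close>-edges (an \<open>i\<close>-th coordinate),
  switch at \<open>y\<close> iff the \<open>i\<close>-edge at \<open>y\<close> disagrees with the reference dashing
  \<open>boson y \<noteq> c y\<close>: both ends of an \<open>i\<close>-edge then agree, and across a \<open>j\<close>-edge the odd
  \<open>(i, j)\<close>-square accounts for the change.\<close>

lemma nbr_pullback_eq_switch: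
  assumes "odd_dashing Q" "i \<in> {1..N}"
    and c: "\<And>y j. y \<in> V \<Longrightarrow> j \<in> {1..N} \<Longrightarrow> c (nbr j y) = (c y \<noteq> (i = j))"
    and e: "e \<in> E"
  defines "S \<equiv> {y \<in> V. Q {y, nbr i y} \<noteq> (boson y \<noteq> c y)}"
  shows "Q (nbr i ` e) = switch S Q e"
proof -
  obtain y where y: "y \<in> V" and ey: "e = {y, nbr (col e) y}" using edge_eq_nbr e by blast
  define j where "j = col e"
  define z where "z = nbr j y"
  have j: "j \<in> {1..N}" using col_edge e j_def by simp
  have ez: "e = {y, z}" using ey j_def z_def by simp
  have zV: "z \<in> V" using nbr_in_V y j z_def by simp
  have yz: "y \<noteq> z" using edge_pairD e ez by blast
  have bz: "boson z = (\<not> boson y)" using boson_nbr y j z_def by simp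
  show ?thesis
  proof (cases "j = i")
    case True
    then have "nbr i ` e = e" "Q {z, nbr i z} = Q {y, nbr i y}" "c z = (\<not> c y)"
      using ez z_def nbr_nbr[OF y assms(2)] c[OF y j] by (auto simp: insert_commute)
    then show ?thesis unfolding ez using switch_pair[OF yz] S_def zV y bz by auto
  next
    case False
    have cz: "c z = c y" using c[OF y j] z_def False by simp
    have w: "nbr i z = nbr j (nbr i y)" using z_def nbr_commute y assms(2) j by metis
    have "{y, z} \<in> E" "col {y, z} = j" using e ez j_def by auto
    moreover have "{z, nbr i z} \<in> E" "col {z, nbr i z} = i" using nbr_edge zV assms(2) by auto
    moreover have "{nbr i z, nbr i y} \<in> E" "col {nbr i z, nbr i y} = j"
      using nbr_edge[of "nbr i y" j] w nbr_in_V y assms(2) j by (auto simp: insert_commute)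
    moreover have "{nbr i y, y} \<in> E" "col {nbr i y, y} = i"
      using nbr_edge y assms(2) by (auto simp: insert_commute)
    ultimately have "odd (of_bool (Q {y, z}) + of_bool (Q {z, nbr i z}) + of_bool (Q {nbr i z, nbr i y})
        + of_bool (Q {nbr i y, y}) :: nat)"
      using assms(1) False unfolding odd_dashing_def by simp
    then have "Q {y, z} \<noteq> (Q {z, nbr i z} \<noteq> (Q {nbr i y, nbr i z} \<noteq> Q {y, nbr i y}))"
      unfolding odd_of_bool_sum4 by (simp add: insert_commute)
    then show ?thesis unfolding ez using switch_pair[OF yz] S_def zV y bz cz by auto
  qed
qed

end

locale cube_adinkra = adinkra_graph N V E boson col par
  for N :: nat and V :: "'v set" and E boson col par +
  assumes card_V: "card V = 2 ^ N"
begin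

lemma inj_on_flips: "b \<in> V \<Longrightarrow> inj_on (\<lambda>T. flips T b) (Pow {1..N})"
proof -
  assume "b \<in> V"
  then have "(\<lambda>T. flips T b) ` Pow {1..N} = V"
    using flips_surj flips_in_V by fastforce
  moreover have "card (Pow {1..N}) = 2 ^ N" by (simp add: card_Pow)
  ultimately show ?thesis using card_V by (intro eq_card_imp_inj_on) auto
qed

definition coords :: "'v \<Rightarrow> 'v \<Rightarrow> nat set" where
  "coords b = the_inv_into (Pow {1..N}) (\<lambda>T. flips T b)"

lemma coords_flips:
  assumes "b \<in> V" "T \<subseteq> {1..N}"
  shows "coords b (flips T b) = T"
  unfolding coords_def using the_inv_into_f_f[OF inj_on_flips[OF assms(1)]] assms(2) by simp

lemma coords_nbr:
  assumes "b \<in> V" "y \<in> V" "j \<in> {1..N}"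
  shows "coords b (nbr j y) = coords b y - {j} \<union> ({j} - coords b y)"
proof -
  obtain T where T: "T \<subseteq> {1..N}" "y = flips T b" using flips_surj assms(1,2) by blast
  then have "nbr j y = flips (T - {j} \<union> ({j} - T)) b"
    using nbr_flips_symdiff assms(1,3) by simp
  moreover have "T - {j} \<union> ({j} - T) \<subseteq> {1..N}" using T(1) assms(3) by auto
  ultimately show ?thesis using coords_flips assms(1) T by simp
qed

lemma nbr_pullback_switching_equiv:
  assumes "odd_dashing Q" "i \<in> {1..N}"
  shows "switching_equiv Q (\<lambda>e. Q (nbr i ` e))"
proof -
  obtain b where b: "b \<in> V" using card_V finite_V by fastforce
  define c where "c y \<longleftrightarrow> i \<in> coords b y" for y
  have "c (nbr j y) = (c y \<noteq> (i = j))" if "y \<in> V" "j \<in> {1..N}" for y j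
    using coords_nbr[OF b that] unfolding c_def by auto
  then have "\<forall>e\<in>E. Q (nbr i ` e) = switch {y \<in> V. Q {y, nbr i y} \<noteq> (boson y \<noteq> c y)} Q e"
    using nbr_pullback_eq_switch[OF assms, of c] by blast
  moreover have "{y \<in> V. Q {y, nbr i y} \<noteq> (boson y \<noteq> c y)} \<subseteq> V" by blast
  ultimately show ?thesis unfolding switching_equiv_def by blast
qed

lemma flips_pullback_switching_equiv:
  assumes "odd_dashing Q"
  shows "switching_equiv Q (\<lambda>e. Q (flips T ` e))"
proof -
  have "k \<le> N \<Longrightarrow> odd_dashing Q \<Longrightarrow> switching_equiv Q (\<lambda>e. Q (flips_upto T k ` e))" for k Q
  proof (induction k arbitrary: Q)
    case 0
    then show ?case using switching_equiv_refl by simp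
  next
    case (Suc k)
    then have k: "Suc k \<in> {1..N}" by simp
    show ?case
    proof (cases "Suc k \<in> T")
      case True
      have "switching_equiv (\<lambda>e. Q (nbr (Suc k) ` e)) (\<lambda>e. Q (nbr (Suc k) ` flips_upto T k ` e))"
        using Suc odd_dashing_nbr_pullback[OF Suc.prems(2) k] by simp
      then have "switching_equiv Q (\<lambda>e. Q (nbr (Suc k) ` flips_upto T k ` e))"
        using switching_equiv_trans nbr_pullback_switching_equiv[OF Suc.prems(2) k] by blast
      with True show ?thesis by (simp add: image_image)
    next
      case False
      with Suc show ?thesis by simp
    qed
  qed
  with assms show ?thesis unfolding flips_def by simp
qed

definition flip_map :: "nat set \<Rightarrow> 'v \<Rightarrow> 'v" where
  "flip_map T y = (if y \<in> V then flips T y else y)"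

lemma flip_map_in_Aut:
  assumes "T \<subseteq> {1..N}" "even (card T)"
  shows "flip_map T \<in> Aut V E boson col par"
proof -
  have flip_map_image: "flip_map T ` e = flips T ` e" if "e \<in> E" for e
    using edge_doubleton[OF that] unfolding flip_map_def by auto
  have "bij_betw (flip_map T) V V"
    by (rule bij_betw_byWitness[where f' = "flip_map T"])
      (auto simp: flip_map_def flips_flips flips_in_V)
  moreover have "{u, v} \<in> E \<longleftrightarrow> {flip_map T u, flip_map T v} \<in> E" if "u \<in> V" "v \<in> V" for u v
    using flips_edge[of u v T] flips_edge[of "flips T u" "flips T v" T] that
    by (auto simp: flip_map_def flips_flips)
  moreover have "col (flip_map T ` e) = col e" if "e \<in> E" for e
  proof -
    obtain u v where "e = {u, v}" using edge_doubleton[OF \<open>e \<in> E\<close>] by blast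
    moreover from this have "flip_map T ` e = {flips T u, flips T v}"
      using flip_map_image[OF that] by simp
    ultimately show ?thesis using flips_edge[of u v T] that by simp
  qed
  moreover have "boson (flip_map T v) = boson v" if "v \<in> V" for v
    using boson_flips[OF that assms(1)] assms(2) that by (simp add: flip_map_def)
  moreover have "\<exists>S\<subseteq>V. \<forall>e\<in>E. par (flip_map T ` e) = switch S par e"
    using flips_pullback_switching_equiv[OF odd_dashing_par, of T]
    unfolding switching_equiv_def by (simp add: flip_map_image)
  ultimately show ?thesis
    unfolding Aut_def adinkra_automorphism_def by (simp add: flip_map_def)
qed

lemma card_Aut:
  assumes "1 \<le> N"
  shows "2 * card (Aut V E boson col par) = card V"
proof -
  obtain b where b: "b \<in> V" using card_V finite_V by fastforce
  have "bij_betw (\<lambda>f. f b) (Aut V E boson col par) {x \<in> V. boson x = boson b}"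
  proof (rule bij_betwI')
    show "f b = g b \<longleftrightarrow> f = g" if "f \<in> Aut V E boson col par" "g \<in> Aut V E boson col par" for f g
      using Aut_eqI[OF that b] by blast
    show "f b \<in> {x \<in> V. boson x = boson b}" if "f \<in> Aut V E boson col par" for f
      using Aut_in_V[OF that b] Aut_boson[OF that b] by simp
    show "\<exists>f\<in>Aut V E boson col par. x = f b" if "x \<in> {x \<in> V. boson x = boson b}" for x
    proof -
      from that have x: "x \<in> V" "boson x = boson b" by auto
      then obtain T where T: "T \<subseteq> {1..N}" "x = flips T b" using flips_surj b by blast
      then have "even (card T)" using boson_flips[OF b T(1)] x by (cases "boson b") auto
      then have "flip_map T \<in> Aut V E boson col par" by (rule flip_map_in_Aut[OF T(1)])
      moreover have "x = flip_map T b" using T b by (simp add: flip_map_def)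
      ultimately show ?thesis by blast
    qed
  qed
  then have "card (Aut V E boson col par) = card {x \<in> V. boson x = boson b}"
    by (rule bij_betw_same_card)
  with card_same_type[OF assms b] show ?thesis by simp
qed

end

theorem mainTheorem4:
  fixes N :: nat and V :: "'v set" and E :: "'v set set" and boson :: "'v \<Rightarrow> bool"
    and col :: "'v set \<Rightarrow> nat" and par :: "'v set \<Rightarrow> bool"
  assumes "adinkra N V E boson col par"
    and "N \<ge> 1"
    and "card V = 2 ^ N"
  shows "(\<forall>f\<in>Aut V E boson col par. \<forall>v\<in>V. f v = v \<longrightarrow> f = id)
    \<and> 2 * card (Aut V E boson col par) = card V
    \<and> card (Aut V E boson col par) = 2 ^ (N - 1)"
proof -
  interpret cube_adinkra N V E boson col par
    using assms(1,3) by unfold_locales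
  have "(2::nat) ^ N = 2 * 2 ^ (N - 1)"
    using assms(2) by (simp flip: power_Suc)
  then show ?thesis
    using Aut_fixing_vertex card_Aut[OF assms(2)] assms(3) by auto
qed

end
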